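(* Let $F(\bar f,g)=0$ be any curve of bidegree $(3,2)$ in $(\bar f,g)\in\mathbb{P}^1\times\mathbb{P}^1$ passing through the 10 points $(\bar f(u),g(u))$, $u=u_1,\dots,u_8,\ z/q,\ h_1/(qz)$. Substitute $g=g(\bar f,\bar g)$, the inverse of the birational map defined by relation (B). Then the resulting curve in $(\bar f,\bar g)$ (i.e. the numerator of $F(\bar f,g(\bar f,\bar g))$ with the factor $\prod_{i=1}^8\{\bar f-\bar f(u_i)\}$ removed) is again of bidegree $(3,2)$ and passes through the 10 points $(\bar f,\bar g)=(\bar f(u),\bar g(u))$ with $u=u_1,\dots,u_8,\ z,\ h_1/z$.
   Context: Let $h_1,h_2,u_1,\dots,u_8$ be generic nonzero complex parameters, $z$ generic, and $q=h_1^2h_2^2/(u_1\cdots u_8)$. Put $g(u)=u+h_2/u$, $\bar f(u)=u+\frac{h_1}{qu}$, $\bar g(u)=u+\frac{h_2q}{u}$. Let $U(z)=\prod_{i=1}^8(z-u_i)=\sum_{i=0}^8(-1)^i m_{8-i}z^i$ (so $m_0=1$, $m_8=h_1^2h_2^2/q$). For a parameter $h$ define polynomials in a variable $x$: $P_n(h,x)=m_0x^4-m_1x^3+(m_2-3hm_0-h^{-3}m_8)x^2+(2hm_1-m_3+h^{-2}m_7)x+(h^2m_0-hm_2+m_4-h^{-1}m_6+h^{-2}m_8)$, $P_d(h,x)=m_8x^4-hm_7x^3+(h^2m_6-3hm_8-h^5m_0)x^2+(2h^2m_7-h^3m_5+h^5m_1)x+(h^6m_0-h^5m_2+h^4m_4-h^3m_6+h^2m_8)$.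 Relation (B), which is linear in each of $g$ and $\bar g$ and defines a birational correspondence $g\leftrightarrow\bar g$ depending on $\bar f$: $$\frac{(\bar f-\bar g)(\bar f-g)-(\frac{h_1}{q}-h_2q)(\frac{h_1}{q}-h_2)\frac q{h_1}}{(\frac{\bar fq}{h_1}-\frac{\bar g}{h_2q})(\frac{\bar fq}{h_1}-\frac g{h_2})-(\frac q{h_1}-\frac1{h_2q})(\frac q{h_1}-\frac1{h_2})\frac{h_1}q}=\frac{h_1^4h_2^2}{q^3}\frac{P_n(\frac{h_1}q,\bar f)}{P_d(\frac{h_1}q,\bar f)}.$$ *)

theory Defs
  imports Complex_Main "HOL-Computational_Algebra.Polynomial"
begin

section \<open>Genericity: complement of the zero set of a nonzero polynomial function\<close>

inductive_set polyfun :: "((nat \<Rightarrow> complex) \<Rightarrow> complex) set" where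
  pf_const: "(\<lambda>x. c) \<in> polyfun"
| pf_var: "(\<lambda>x. x i) \<in> polyfun"
| pf_add: "p \<in> polyfun \<Longrightarrow> r \<in> polyfun \<Longrightarrow> (\<lambda>x. p x + r x) \<in> polyfun"
| pf_mul: "p \<in> polyfun \<Longrightarrow> r \<in> polyfun \<Longrightarrow> (\<lambda>x. p x * r x) \<in> polyfun"

definition params :: "complex \<Rightarrow> complex \<Rightarrow> (nat \<Rightarrow> complex) \<Rightarrow> complex \<Rightarrow> nat \<Rightarrow> complex" where
  "params h1 h2 u z = (\<lambda>i. if i = 0 then h1 else if i = 9 then h2 else if i = 10 then z else u i)"

definition qq :: "complex \<Rightarrow> complex \<Rightarrow> (nat \<Rightarrow> complex) \<Rightarrow> complex" where
  "qq h1 h2 u = h1^2 * h2^2 / (\<Prod>i\<in>{1..8}. u i)"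

definition Upoly :: "(nat \<Rightarrow> complex) \<Rightarrow> complex poly" where
  "Upoly u = (\<Prod>i\<in>{1..8}. [:- u i, 1:])"

text \<open>U(z) = sum_{i=0}^8 (-1)^i m_{8-i} z^i, i.e. m_k = (-1)^(8-k) [z^(8-k)] U(z).\<close>
definition mm :: "(nat \<Rightarrow> complex) \<Rightarrow> nat \<Rightarrow> complex" where
  "mm u k = (-1)^(8-k) * coeff (Upoly u) (8-k)"

definition Pn :: "(nat \<Rightarrow> complex) \<Rightarrow> complex \<Rightarrow> complex \<Rightarrow> complex" where
  "Pn u h x = mm u 0 * x^4 - mm u 1 * x^3
     + (mm u 2 - 3*h*mm u 0 - mm u 8 / h^3) * x^2
     + (2*h*mm u 1 - mm u 3 + mm u 7 / h^2) * x
     + (h^2*mm u 0 - h*mm u 2 + mm u 4 - mm u 6 / h + mm u 8 / h^2)"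

definition Pd :: "(nat \<Rightarrow> complex) \<Rightarrow> complex \<Rightarrow> complex \<Rightarrow> complex" where
  "Pd u h x = mm u 8 * x^4 - h*mm u 7 * x^3
     + (h^2*mm u 6 - 3*h*mm u 8 - h^5*mm u 0) * x^2
     + (2*h^2*mm u 7 - h^3*mm u 5 + h^5*mm u 1) * x
     + (h^6*mm u 0 - h^5*mm u 2 + h^4*mm u 4 - h^3*mm u 6 + h^2*mm u 8)"

definition gfun :: "complex \<Rightarrow> complex \<Rightarrow> complex" where
  "gfun h2 v = v + h2 / v"

definition fbar :: "complex \<Rightarrow> complex \<Rightarrow> complex \<Rightarrow> complex" where
  "fbar h1 q v = v + h1 / (q * v)"

definition gbar :: "complex \<Rightarrow> complex \<Rightarrow> complex \<Rightarrow> complex" where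
  "gbar h2 q v = v + h2 * q / v"

text \<open>Relation (B), literally, between fb = \<open>\<bar>f\<close>, g and gb = \<open>\<bar>g\<close>.\<close>
definition relB :: "complex \<Rightarrow> complex \<Rightarrow> (nat \<Rightarrow> complex) \<Rightarrow> complex \<Rightarrow> complex \<Rightarrow> complex \<Rightarrow> bool" where
  "relB h1 h2 u fb g gb \<longleftrightarrow>
     (let q = qq h1 h2 u in
       ((fb - gb) * (fb - g) - (h1/q - h2*q) * (h1/q - h2) * (q/h1))
       / ((fb*q/h1 - gb/(h2*q)) * (fb*q/h1 - g/h2) - (q/h1 - 1/(h2*q)) * (q/h1 - 1/h2) * (h1/q))
       = (h1^4 * h2^2 / q^3) * (Pn u (h1/q) fb / Pd u (h1/q) fb))"

definition ginv_dom :: "complex \<Rightarrow> complex \<Rightarrow> (nat \<Rightarrow> complex) \<Rightarrow> complex \<Rightarrow> complex \<Rightarrow> bool" where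
  "ginv_dom h1 h2 u fb gb \<longleftrightarrow>
     Pn u (h1 / qq h1 h2 u) fb \<noteq> 0 \<and> Pd u (h1 / qq h1 h2 u) fb \<noteq> 0 \<and> (\<exists>!g. relB h1 h2 u fb g gb)"

definition ginv :: "complex \<Rightarrow> complex \<Rightarrow> (nat \<Rightarrow> complex) \<Rightarrow> complex \<Rightarrow> complex \<Rightarrow> complex" where
  "ginv h1 h2 u fb gb = (THE g. relB h1 h2 u fb g gb)"

definition bieval :: "(nat \<Rightarrow> nat \<Rightarrow> complex) \<Rightarrow> complex \<Rightarrow> complex \<Rightarrow> complex" where
  "bieval a x y = (\<Sum>i\<le>3. \<Sum>j\<le>2. a i j * x^i * y^j)"

text \<open>Bihomogenised substitution y = P/Q: the numerator of F(x, P/Q).\<close>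
definition bihom :: "(nat \<Rightarrow> nat \<Rightarrow> complex) \<Rightarrow> complex \<Rightarrow> complex \<Rightarrow> complex \<Rightarrow> complex" where
  "bihom a x P Q = (\<Sum>i\<le>3. \<Sum>j\<le>2. a i j * x^i * P^j * Q^(2-j))"

definition nonzero32 :: "(nat \<Rightarrow> nat \<Rightarrow> complex) \<Rightarrow> bool" where
  "nonzero32 a \<longleftrightarrow> (\<exists>i\<le>3. \<exists>j\<le>2. a i j \<noteq> 0)"

end

theory Submission
  imports Defs
begin

text \<open>
  Put \<open>h = h1/q\<close>, so that \<open>\<bar>f(v) = v + h/v\<close>.  After clearing
  denominators, relation (B) is linear in \<open>g\<close>: \<open>g \<cdot> mob_den = mob_num\<close>, where both sides
  are affine in \<open>\<bar>g\<close> and polynomial in \<open>\<bar>f\<close> and share the factor \<open>\<bar>f\<close>.  Removing it gives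
  the inverse map as a Moebius transformation \<open>g = (p1 \<bar>g + p0)/(q1 \<bar>g + q0)\<close> with
  coefficients of degree at most 4 in \<open>\<bar>f\<close>.

  Everything about special points follows from one identity (the pencil identity): on
  \<open>\<bar>f = v + h/v\<close>, \<open>Pd + h^3 v^2 Pn\<close> equals \<open>h^3 (v^2+h) U(v) / v^4\<close>.  Hence over
  \<open>\<bar>f(u_k)\<close> the inverse map collapses to the constant \<open>g(u_k)\<close>, while it sends
  \<open>(\<bar>f(v), \<bar>g(v))\<close> to \<open>g(h/v)\<close> with a denominator proportional to \<open>U(v)\<close>.

  Inside a
  locale of generic parameters, the substituted form is shown to be divisible by
  \<open>\<Prod>_k (\<bar>f - \<bar>f(u_k))\<close>; the quotient \<open>b\<close> vanishes at \<open>v = z, h1/z\<close> directly and at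
  \<open>v = u_i\<close> by a limit argument, and is nonzero because the Moebius map is nondegenerate.
\<close>

lemma poly_zero_if_cofinite_roots:
  fixes p :: "'a::{idom,ring_char_0} poly"
  assumes "finite S" and "\<And>x. x \<notin> S \<Longrightarrow> poly p x = 0"
  shows "p = 0"
proof (rule ccontr)
  assume "p \<noteq> 0"
  then have "finite (S \<union> {x. poly p x = 0})"
    using assms(1) poly_roots_finite by blast
  moreover have "S \<union> {x. poly p x = 0} = UNIV"
    using assms(2) by blast
  ultimately show False
    using infinite_UNIV_char_0 by metis
qed

lemma poly_divide_by_var:
  fixes p :: "'a::comm_ring_1 poly"
  assumes "poly p 0 = 0"
  shows "poly p x = x * poly (synthetic_div p 0) x"
proof -
  have "[:0, 1:] * synthetic_div p 0 = p"
    using synthetic_div_correct'[of 0 p] assms by simp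
  then have "poly p x = poly ([:0, 1:] * synthetic_div p 0) x"
    by simp
  then show ?thesis
    by simp
qed

lemma prod_linear_factors_dvd:
  fixes p :: "'a::field poly"
  assumes "finite S" and "inj_on f S" and "\<And>k. k \<in> S \<Longrightarrow> poly p (f k) = 0"
  shows "(\<Prod>k\<in>S. [:- f k, 1:]) dvd p"
  using assms
proof (induction S rule: finite_induct)
  case empty
  then show ?case by simp
next
  case (insert a S)
  then have "(\<Prod>k\<in>S. [:- f k, 1:]) dvd p"
    by (simp add: inj_on_insert)
  then obtain r where r: "p = (\<Prod>k\<in>S. [:- f k, 1:]) * r"
    by (auto elim: dvdE)
  have "f a \<noteq> f k" if "k \<in> S" for k
    using insert.hyps(2) insert.prems(1) that by (auto simp: inj_on_def)
  then have "poly (\<Prod>k\<in>S. [:- f k, 1:]) (f a) \<noteq> 0"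
    by (simp add: poly_prod insert.hyps(1))
  moreover have "poly p (f a) = 0"
    using insert.prems(2) by simp
  ultimately have "[:- f a, 1:] dvd r"
    using r by (simp add: poly_eq_0_iff_dvd[symmetric])
  then have "[:- f a, 1:] * (\<Prod>k\<in>S. [:- f k, 1:]) dvd (\<Prod>k\<in>S. [:- f k, 1:]) * r"
    by (metis mult.commute mult_dvd_mono dvd_refl)
  then show ?case
    using r insert.hyps(1,2) by simp
qed

lemma degree_prod_linear_factors:
  "finite S \<Longrightarrow> degree (\<Prod>k\<in>S. [:- f k, 1::'a::field:]) = card S"
  by (subst degree_prod_sum_eq) auto

lemma continuous_eventually_zero:
  fixes f :: "'a::{perfect_space,t2_space} \<Rightarrow> 'b::t2_space"
  assumes "isCont f a" and "eventually (\<lambda>v. f v = c) (at a)"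
  shows "f a = c"
proof -
  have "(f \<longlongrightarrow> f a) (at a)" and "(f \<longlongrightarrow> c) (at a)"
    using assms isCont_def tendsto_eventually by blast+
  then show ?thesis
    using tendsto_unique[OF at_neq_bot] by blast
qed

section \<open>Curves of bidegree (3,2) and Moebius substitutions\<close>

definition ycoeff :: "(nat \<Rightarrow> nat \<Rightarrow> complex) \<Rightarrow> nat \<Rightarrow> complex poly" where
  "ycoeff a j = [:a 0 j, a 1 j, a 2 j, a 3 j:]"

lemma bieval_ycoeff:
  "bieval a x y = poly (ycoeff a 0) x + poly (ycoeff a 1) x * y + poly (ycoeff a 2) x * y^2"
  unfolding bieval_def ycoeff_def by (simp add: eval_nat_numeral algebra_simps)

lemma bihom_ycoeff:
  "bihom a x P Q = poly (ycoeff a 0) x * Q^2 + poly (ycoeff a 1) x * P * Q + poly (ycoeff a 2) x * P^2"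
  unfolding bihom_def ycoeff_def by (simp add: eval_nat_numeral algebra_simps)

text \<open>Substituting a point \<open>y = g\<close> written projectively as \<open>(g Q : Q)\<close>.\<close>
lemma bihom_proportional: "bihom a x (g * Q) Q = Q^2 * bieval a x g"
  unfolding bihom_ycoeff bieval_ycoeff by (simp add: algebra_simps power2_eq_square)

lemma degree_ycoeff: "degree (ycoeff a j) \<le> 3"
  unfolding ycoeff_def by (rule degree_le) (auto simp: coeff_pCons split: nat.split)

lemma ycoeff_eq_0_iff: "ycoeff a j = 0 \<longleftrightarrow> (\<forall>i\<le>3. a i j = 0)"
  unfolding ycoeff_def by (auto simp: le_Suc_eq numeral_3_eq_3 numeral_2_eq_2)

lemma nonzero32_iff_ycoeff: "nonzero32 a \<longleftrightarrow> (\<exists>j\<le>2. ycoeff a j \<noteq> 0)"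
  unfolding nonzero32_def ycoeff_eq_0_iff by blast

lemma ycoeff_of_coeffs:
  assumes "degree (c j) \<le> 3"
  shows "ycoeff (\<lambda>i j. coeff (c j) i) j = c j"
  unfolding ycoeff_def using assms
  by (intro poly_eqI) (auto simp: coeff_pCons coeff_eq_0 numeral_2_eq_2 numeral_3_eq_3 split: nat.split)

text \<open>The \<open>y\<close>-coefficients of the numerator of \<open>F(x, (p1 y + p0)/(q1 y + q0))\<close>.\<close>
definition subst_ycoeff ::
  "(nat \<Rightarrow> nat \<Rightarrow> complex) \<Rightarrow> complex poly \<Rightarrow> complex poly \<Rightarrow> complex poly \<Rightarrow> complex poly \<Rightarrow> nat \<Rightarrow> complex poly"
where
  "subst_ycoeff a p1 p0 q1 q0 j =
     (if j = 0 then ycoeff a 0 * q0^2 + ycoeff a 1 * p0 * q0 + ycoeff a 2 * p0^2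
      else if j = 1 then smult 2 (ycoeff a 0 * q1 * q0) + ycoeff a 1 * (p1 * q0 + p0 * q1)
        + smult 2 (ycoeff a 2 * p1 * p0)
      else ycoeff a 0 * q1^2 + ycoeff a 1 * p1 * q1 + ycoeff a 2 * p1^2)"

lemma bihom_subst_ycoeff:
  "bihom a x (poly p1 x * y + poly p0 x) (poly q1 x * y + poly q0 x)
   = poly (subst_ycoeff a p1 p0 q1 q0 0) x + poly (subst_ycoeff a p1 p0 q1 q0 1) x * y
     + poly (subst_ycoeff a p1 p0 q1 q0 2) x * y^2"
  unfolding bihom_ycoeff subst_ycoeff_def by (simp add: algebra_simps power2_eq_square)

lemma degree_subst_ycoeff:
  assumes "degree p1 \<le> 4" "degree p0 \<le> 4" "degree q1 \<le> 4" "degree q0 \<le> 4"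
  shows "degree (subst_ycoeff a p1 p0 q1 q0 j) \<le> 11"
proof -
  have deg_mult: "degree (r * s) \<le> m + n" if "degree r \<le> m" "degree s \<le> n"
    for r s :: "complex poly" and m n
    using degree_mult_le[of r s] that by linarith
  have summand: "degree (ycoeff a i * (r * s)) \<le> 11" if "degree r \<le> 4" "degree s \<le> 4" for i r s
    using deg_mult[OF degree_ycoeff deg_mult[OF that]] by simp
  show ?thesis
    unfolding subst_ycoeff_def power2_eq_square mult.assoc distrib_left
    using assms by (auto intro!: degree_add_le summand order.trans[OF degree_smult_le])
qed

text \<open>For fixed \<open>x\<close>, a nondegenerate Moebius substitution in \<open>y\<close> reaches every value \<open>g\<close>
  with \<open>P1 - g Q1 \<noteq> 0\<close>; hence if the substituted form vanishes identically in \<open>y\<close>,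
  so does \<open>F(x, g)\<close> at all such \<open>g\<close>.\<close>
lemma mobius_fibre_vanishes:
  fixes P1 P0 Q1 Q0 g :: complex
  assumes det: "P1 * Q0 - P0 * Q1 \<noteq> 0"
    and vanish: "\<And>y. bihom a x (P1 * y + P0) (Q1 * y + Q0) = 0"
    and g: "P1 - g * Q1 \<noteq> 0"
  shows "bieval a x g = 0"
proof -
  define y where "y = (g * Q0 - P0) / (P1 - g * Q1)"
  have Q: "Q1 * y + Q0 = (P1 * Q0 - P0 * Q1) / (P1 - g * Q1)"
    unfolding y_def using g by (simp add: field_simps)
  have P: "P1 * y + P0 = g * (Q1 * y + Q0)"
    unfolding Q unfolding y_def using g by (simp add: field_simps)
  have "(Q1 * y + Q0)^2 * bieval a x g = 0"
    using vanish[of y] unfolding P bihom_proportional .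
  moreover have "Q1 * y + Q0 \<noteq> 0"
    unfolding Q using det g by simp
  ultimately show ?thesis by simp
qed

lemma mobius_substitution_nonzero:
  fixes p1 p0 q1 q0 :: "complex poly"
  assumes det: "p1 * q0 - p0 * q1 \<noteq> 0"
    and vanish: "\<And>x y. bihom a x (poly p1 x * y + poly p0 x) (poly q1 x * y + poly q0 x) = 0"
  shows "\<not> nonzero32 a"
proof -
  have column: "poly (ycoeff a j) x = 0"
    if x: "poly (p1 * q0 - p0 * q1) x \<noteq> 0" and j: "j \<le> 2" for x j
  proof -
    let ?P1 = "poly p1 x" and ?Q1 = "poly q1 x"
    have detx: "?P1 * poly q0 x - poly p0 x * ?Q1 \<noteq> 0"
      using x by simp
    have "{g. ?P1 - g * ?Q1 = 0} \<subseteq> {?P1 / ?Q1}"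
      using detx by (auto simp: field_simps)
    then have "finite {g. ?P1 - g * ?Q1 = 0}"
      by (rule finite_subset) simp
    moreover have "poly [:poly (ycoeff a 0) x, poly (ycoeff a 1) x, poly (ycoeff a 2) x:] g = 0"
      if "g \<notin> {g. ?P1 - g * ?Q1 = 0}" for g
      using mobius_fibre_vanishes[OF detx vanish, of g] that
      by (simp add: bieval_ycoeff algebra_simps power2_eq_square)
    ultimately have "[:poly (ycoeff a 0) x, poly (ycoeff a 1) x, poly (ycoeff a 2) x:] = 0"
      by (rule poly_zero_if_cofinite_roots)
    then show ?thesis
      using j by (auto simp: le_Suc_eq numeral_2_eq_2)
  qed
  have "ycoeff a j = 0" if "j \<le> 2" for j
    by (rule poly_zero_if_cofinite_roots[OF poly_roots_finite[OF det]]) (use column that in auto)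
  then show ?thesis
    unfolding nonzero32_iff_ycoeff by blast
qed
section \<open>The polynomials \<open>Pn\<close>, \<open>Pd\<close> and the pencil identity\<close>

definition pnP :: "(nat \<Rightarrow> complex) \<Rightarrow> complex \<Rightarrow> complex poly" where
  "pnP u h = [: h^2 * mm u 0 - h * mm u 2 + mm u 4 - mm u 6 / h + mm u 8 / h^2,
                2*h * mm u 1 - mm u 3 + mm u 7 / h^2, mm u 2 - 3*h * mm u 0 - mm u 8 / h^3,
                - mm u 1, mm u 0 :]"

definition pdP :: "(nat \<Rightarrow> complex) \<Rightarrow> complex \<Rightarrow> complex poly" where
  "pdP u h = [: h^6 * mm u 0 - h^5 * mm u 2 + h^4 * mm u 4 - h^3 * mm u 6 + h^2 * mm u 8,
                2*h^2 * mm u 7 - h^3 * mm u 5 + h^5 * mm u 1, h^2 * mm u 6 - 3*h * mm u 8 - h^5 * mm u 0,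
                - h * mm u 7, mm u 8 :]"

lemma poly_pnP: "poly (pnP u h) x = Pn u h x"
  unfolding pnP_def Pn_def by (simp add: algebra_simps power2_eq_square power3_eq_cube power4_eq_xxxx)

lemma poly_pdP: "poly (pdP u h) x = Pd u h x"
  unfolding pdP_def Pd_def by (simp add: algebra_simps power2_eq_square power3_eq_cube power4_eq_xxxx)

lemma degree_pnP: "degree (pnP u h) \<le> 4" and degree_pdP: "degree (pdP u h) \<le> 4"
  unfolding pnP_def pdP_def by (auto intro!: degree_le simp: coeff_pCons split: nat.split)

lemma coeff_4_pnP: "coeff (pnP u h) 4 = mm u 0" and coeff_4_pdP: "coeff (pdP u h) 4 = mm u 8"
  unfolding pnP_def pdP_def by (simp_all add: eval_nat_numeral)

text \<open>The constant terms are proportional; this is what makes a factor \<open>x\<close> split off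
  the inverse map below.\<close>
lemma Pd_0: "h \<noteq> 0 \<Longrightarrow> Pd u h 0 = h^4 * Pn u h 0"
  unfolding Pn_def Pd_def by (simp add: field_simps eval_nat_numeral)

lemma mm_0: "mm u 0 = 1"
proof -
  have "coeff (Upoly u) 8 = lead_coeff (Upoly u)"
    unfolding Upoly_def by (subst degree_prod_linear_factors) simp_all
  also have "\<dots> = 1"
    unfolding Upoly_def lead_coeff_prod by simp
  finally show ?thesis
    unfolding mm_def by simp
qed

lemma mm_8: "mm u 8 = (\<Prod>i\<in>{1..8}. u i)"
proof -
  have "mm u 8 = poly (Upoly u) 0"
    unfolding mm_def by (simp add: poly_0_coeff_0)
  also have "\<dots> = (\<Prod>i\<in>{1..8}. u i)"
    unfolding Upoly_def poly_prod by (simp add: prod_uminus)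
  finally show ?thesis .
qed

lemma U_expand:
  "(\<Prod>i\<in>{1..8}. v - u i) = mm u 0 * v^8 - mm u 1 * v^7 + mm u 2 * v^6 - mm u 3 * v^5
     + mm u 4 * v^4 - mm u 5 * v^3 + mm u 6 * v^2 - mm u 7 * v + mm u 8"
proof -
  have "(\<Prod>i\<in>{1..8}. v - u i) = poly (Upoly u) v"
    unfolding Upoly_def poly_prod by simp
  also have "\<dots> = (\<Sum>i\<le>8. coeff (Upoly u) i * v^i)"
    unfolding poly_altdef Upoly_def by (subst degree_prod_linear_factors) simp_all
  finally show ?thesis
    unfolding mm_def by (simp add: eval_nat_numeral algebra_simps)
qed

text \<open>All
  special points of the theorem are consequences of this single identity.\<close>
lemma pencil_identity:
  fixes h x v :: complex
  assumes "h \<noteq> 0" and "x * v = v^2 + h"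
  shows "v^4 * (Pd u h x + h^3 * v^2 * Pn u h x) = h^3 * (v^2 + h) * (\<Prod>i\<in>{1..8}. v - u i)"
proof -
  define hi where "hi = inverse h"
  have hi: "h * hi = 1"
    unfolding hi_def using assms(1) by simp
  have Pn: "Pn u h x = mm u 0 * x^4 - mm u 1 * x^3 + (mm u 2 - 3*h * mm u 0 - mm u 8 * hi^3) * x^2
     + (2*h * mm u 1 - mm u 3 + mm u 7 * hi^2) * x
     + (h^2 * mm u 0 - h * mm u 2 + mm u 4 - mm u 6 * hi + mm u 8 * hi^2)"
    unfolding Pn_def hi_def by (simp add: divide_inverse power_inverse)
  show ?thesis
    unfolding Pn Pd_def U_expand using hi assms(2) by algebra
qed

section \<open>Relation (B) as a Moebius transformation in \<open>g\<close>\<close>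

text \<open>After clearing denominators, relation (B) is linear in \<open>g\<close>:
  \<open>g \<cdot> mob_den - mob_num = 0\<close>, both sides being affine in \<open>\<bar>g\<close>.\<close>
definition mob_den :: "(nat \<Rightarrow> complex) \<Rightarrow> complex \<Rightarrow> complex \<Rightarrow> complex \<Rightarrow> complex \<Rightarrow> complex \<Rightarrow> complex" where
  "mob_den u h h2 q x y = Pd u h x * (y - x) + h^3 * Pn u h x * (h2*q*x - h*y)"

definition mob_num :: "(nat \<Rightarrow> complex) \<Rightarrow> complex \<Rightarrow> complex \<Rightarrow> complex \<Rightarrow> complex \<Rightarrow> complex \<Rightarrow> complex" where
  "mob_num u h h2 q x y = x * y * (Pd u h x - h^3*h2 * Pn u h x)
     + Pd u h x * ((h - h2*q) * (h - h2) / h - x^2)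
     + h^2 * Pn u h x * (q*h2^2*x^2 - h * (h - h2*q) * (h - h2))"

lemma relB_linear:
  fixes h1 h2 q fb gb g :: complex
  assumes "h1 \<noteq> 0" "h2 \<noteq> 0" "q \<noteq> 0"
  shows "Pd u (h1/q) fb * ((fb - gb) * (fb - g) - (h1/q - h2*q) * (h1/q - h2) * (q/h1))
     - h1^4 * h2^2 / q^3 * Pn u (h1/q) fb
        * ((fb*q/h1 - gb/(h2*q)) * (fb*q/h1 - g/h2) - (q/h1 - 1/(h2*q)) * (q/h1 - 1/h2) * (h1/q))
   = g * mob_den u (h1/q) h2 q fb gb - mob_num u (h1/q) h2 q fb gb"
proof -
  define pn pd where "pn = Pn u (h1/q) fb" and "pd = Pd u (h1/q) fb"
  have inv: "h1 * inverse h1 = 1" "h2 * inverse h2 = 1" "q * inverse q = 1"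
    using assms by simp_all
  show ?thesis
    unfolding mob_den_def mob_num_def pn_def[symmetric] pd_def[symmetric]
    by (simp only: divide_inverse inverse_mult_distrib inverse_inverse_eq power_inverse[symmetric]
        mult_1_left) (use inv in algebra)
qed

lemma unique_root_of_linear_relation:
  fixes N D :: "complex \<Rightarrow> complex"
  assumes rel: "\<And>g. Rel g \<longleftrightarrow> N g / D g = R" and R: "R \<noteq> 0"
    and lin: "\<And>g. N g - R * D g = s * (g * Qc - Pc)" and s: "s \<noteq> 0"
    and affine: "\<And>g. D g = d0 + d1 * g" and unique: "\<exists>!g. Rel g"
  shows "Qc \<noteq> 0 \<and> (THE g. Rel g) = Pc / Qc"
proof -
  obtain g0 where g0: "Rel g0" and g0_unique: "\<And>g. Rel g \<Longrightarrow> g = g0"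
    using unique by blast
  have sol: "g * Qc = Pc" if "Rel g" for g
  proof -
    have ND: "N g / D g = R" using rel that by blast
    then have "D g \<noteq> 0" using R by auto
    then have "N g = R * D g" using ND by (simp add: divide_eq_eq)
    then show ?thesis using lin[of g] s by simp
  qed
  have "Qc \<noteq> 0"
  proof
    assume Qc: "Qc = 0"
    then have Pc: "Pc = 0" using sol[OF g0] by simp
    have every: "g = g0" if "D g \<noteq> 0" for g
    proof (rule g0_unique)
      have "N g = R * D g" using lin[of g] Qc Pc by simp
      then show "Rel g" using that by (simp add: rel)
    qed
    have "N g0 / D g0 = R" using rel g0 by blast
    then have "D g0 \<noteq> 0" using R by auto
    moreover have "d1 = D (g0 + 2) - D (g0 + 1)" and "D g0 = D (g0 + 1) - d1"
      unfolding affine by (simp_all add: algebra_simps)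
    ultimately consider "D (g0 + 1) \<noteq> 0" | "D (g0 + 2) \<noteq> 0"
      by force
    then show False
      by cases (use every in force)+
  qed
  moreover have "(THE g. Rel g) = g0"
    using g0 g0_unique by blast
  ultimately show ?thesis
    using sol[OF g0] by (simp add: field_simps)
qed

lemma ginv_eq_mob:
  assumes nz: "h1 \<noteq> 0" "h2 \<noteq> 0" "qq h1 h2 u \<noteq> 0" and dom: "ginv_dom h1 h2 u fb gb"
  defines "q \<equiv> qq h1 h2 u"
  shows "mob_den u (h1/q) h2 q fb gb \<noteq> 0
    \<and> ginv h1 h2 u fb gb = mob_num u (h1/q) h2 q fb gb / mob_den u (h1/q) h2 q fb gb"
proof -
  define pn pd where "pn = Pn u (h1/q) fb" and "pd = Pd u (h1/q) fb"
  have pn: "pn \<noteq> 0" and pd: "pd \<noteq> 0" and unique: "\<exists>!g. relB h1 h2 u fb g gb"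
    using dom unfolding ginv_dom_def pn_def pd_def q_def by auto
  define K where "K = h1^4 * h2^2 / q^3"
  define N where "N g = (fb - gb) * (fb - g) - (h1/q - h2*q) * (h1/q - h2) * (q/h1)" for g
  define D where "D g = (fb*q/h1 - gb/(h2*q)) * (fb*q/h1 - g/h2)
     - (q/h1 - 1/(h2*q)) * (q/h1 - 1/h2) * (h1/q)" for g
  have rel: "relB h1 h2 u fb g gb \<longleftrightarrow> N g / D g = K * (pn / pd)" for g
    unfolding relB_def Let_def N_def D_def K_def pn_def pd_def q_def ..
  have lin: "N g - K * (pn / pd) * D g
      = inverse pd * (g * mob_den u (h1/q) h2 q fb gb - mob_num u (h1/q) h2 q fb gb)" for g
  proof -
    have "N g - K * (pn / pd) * D g = inverse pd * (pd * N g - K * pn * D g)"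
      using pd by (simp add: field_simps)
    also have "pd * N g - K * pn * D g = g * mob_den u (h1/q) h2 q fb gb - mob_num u (h1/q) h2 q fb gb"
      unfolding N_def D_def K_def pn_def pd_def by (rule relB_linear[OF nz(1,2) nz(3)[folded q_def]])
    finally show ?thesis .
  qed
  have affine: "D g = ((fb*q/h1 - gb/(h2*q)) * (fb*q/h1) - (q/h1 - 1/(h2*q)) * (q/h1 - 1/h2) * (h1/q))
      + (- (fb*q/h1 - gb/(h2*q)) / h2) * g" for g
    unfolding D_def using nz by (simp add: field_simps)
  have "K * (pn / pd) \<noteq> 0"
    unfolding K_def q_def using nz pn pd by simp
  from unique_root_of_linear_relation[OF rel this lin _ affine unique] pd
  show ?thesis
    unfolding ginv_def by simp
qed

text \<open>The polynomial coefficients of the Moebius map, with the common factor \<open>x\<close> removed.\<close>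
definition den1P :: "(nat \<Rightarrow> complex) \<Rightarrow> complex \<Rightarrow> complex poly" where
  "den1P u h = synthetic_div (pdP u h - smult (h^4) (pnP u h)) 0"

definition den0P :: "(nat \<Rightarrow> complex) \<Rightarrow> complex \<Rightarrow> complex \<Rightarrow> complex \<Rightarrow> complex poly" where
  "den0P u h h2 q = smult (h^3*h2*q) (pnP u h) - pdP u h"

definition num1P :: "(nat \<Rightarrow> complex) \<Rightarrow> complex \<Rightarrow> complex \<Rightarrow> complex poly" where
  "num1P u h h2 = pdP u h - smult (h^3*h2) (pnP u h)"

definition num0P :: "(nat \<Rightarrow> complex) \<Rightarrow> complex \<Rightarrow> complex \<Rightarrow> complex \<Rightarrow> complex poly" where
  "num0P u h h2 q = synthetic_div
     (smult ((h - h2*q) * (h - h2) / h) (pdP u h) - smult (h^3 * ((h - h2*q) * (h - h2))) (pnP u h)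
      + monom 1 2 * (smult (h^2*q*h2^2) (pnP u h) - pdP u h)) 0"

lemma mobius_coefficients:
  assumes "h \<noteq> 0"
  shows "poly (num1P u h h2) x = Pd u h x - h^3*h2 * Pn u h x"
    and "poly (den0P u h h2 q) x = h^3*h2*q * Pn u h x - Pd u h x"
    and "x * poly (den1P u h) x = Pd u h x - h^4 * Pn u h x"
    and "x * poly (num0P u h h2 q) x = (h - h2*q) * (h - h2) / h * Pd u h x
           - h^3 * ((h - h2*q) * (h - h2)) * Pn u h x + x^2 * (h^2*q*h2^2 * Pn u h x - Pd u h x)"
proof -
  show "poly (num1P u h h2) x = Pd u h x - h^3*h2 * Pn u h x"
    and "poly (den0P u h h2 q) x = h^3*h2*q * Pn u h x - Pd u h x"
    unfolding num1P_def den0P_def by (simp_all add: poly_pnP poly_pdP)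
  have "poly (pdP u h - smult (h^4) (pnP u h)) 0 = 0"
    by (simp add: poly_pnP poly_pdP Pd_0[OF assms])
  from poly_divide_by_var[OF this, of x]
  show "x * poly (den1P u h) x = Pd u h x - h^4 * Pn u h x"
    unfolding den1P_def by (simp add: poly_pnP poly_pdP)
  let ?C = "(h - h2*q) * (h - h2)"
  let ?P = "smult (?C / h) (pdP u h) - smult (h^3 * ?C) (pnP u h)
      + monom 1 2 * (smult (h^2*q*h2^2) (pnP u h) - pdP u h)"
  have "?C / h * (h^4 * Pn u h 0) = h^3 * ?C * Pn u h 0"
    using assms by (simp add: field_simps eval_nat_numeral)
  then have "poly ?P 0 = 0"
    by (simp add: poly_pnP poly_pdP Pd_0[OF assms] poly_monom)
  from poly_divide_by_var[OF this, of x]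
  show "x * poly (num0P u h h2 q) x = ?C / h * Pd u h x - h^3 * ?C * Pn u h x
      + x^2 * (h^2*q*h2^2 * Pn u h x - Pd u h x)"
    unfolding num0P_def by (simp add: poly_pnP poly_pdP poly_monom algebra_simps)
qed

lemma mob_den_factor:
  assumes "h \<noteq> 0"
  shows "mob_den u h h2 q x y = x * (poly (den1P u h) x * y + poly (den0P u h h2 q) x)"
  using mobius_coefficients(2)[OF assms, of u h2 q x]
    mobius_coefficients(3)[OF assms, of x u]
  unfolding mob_den_def by algebra

lemma mob_num_factor:
  assumes "h \<noteq> 0"
  shows "mob_num u h h2 q x y = x * (poly (num1P u h h2) x * y + poly (num0P u h h2 q) x)"
  using mobius_coefficients(1)[OF assms, of u h2 x]
    mobius_coefficients(4)[OF assms, of x u h2 q]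
  unfolding mob_num_def by algebra

lemma degree_mobius_polys:
  assumes "mm u 8 = h^2 * q * h2^2"
  shows "degree (num1P u h h2) \<le> 4" "degree (num0P u h h2 q) \<le> 4"
    "degree (den1P u h) \<le> 4" "degree (den0P u h h2 q) \<le> 4"
proof -
  have deg_pn: "degree (smult c (pnP u h)) \<le> 4" for c
    using degree_smult_le degree_pnP order.trans by blast
  show "degree (num1P u h h2) \<le> 4" "degree (den0P u h h2 q) \<le> 4"
    unfolding num1P_def den0P_def by (auto intro!: degree_diff_le deg_pn degree_pdP)
  show "degree (den1P u h) \<le> 4"
    unfolding den1P_def degree_synthetic_div
    using degree_diff_le[OF degree_pdP[of u h] deg_pn[of "h^4"]] by linarith
  text \<open>The coefficient of \<open>x^6\<close> in the numerator cancels because \<open>m_8 = h^2 q h2^2 m_0\<close>.\<close>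
  let ?R = "smult (h^2*q*h2^2) (pnP u h) - pdP u h"
  have "degree ?R \<le> 3"
  proof (rule degree_le, intro allI impI)
    fix i :: nat assume "3 < i"
    then consider "i = 4" | "4 < i" by linarith
    then show "coeff ?R i = 0"
    proof cases
      case 1 then show ?thesis using assms by (simp add: coeff_4_pnP coeff_4_pdP mm_0)
    next
      case 2 then show ?thesis
        using degree_diff_le[OF deg_pn[of "h^2*q*h2^2"] degree_pdP[of u h]]
        by (meson coeff_eq_0 le_less_trans)
    qed
  qed
  then have R: "degree (monom (1::complex) 2 * ?R) \<le> 5"
    using degree_mult_le[of "monom 1 2" ?R] degree_monom_le[of "1::complex" 2] by linarith
  have "degree (smult ((h - h2*q) * (h - h2) / h) (pdP u h)
      - smult (h^3 * ((h - h2*q) * (h - h2))) (pnP u h)) \<le> 4"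
    by (intro degree_diff_le deg_pn order.trans[OF degree_smult_le degree_pdP])
  then have "degree (smult ((h - h2*q) * (h - h2) / h) (pdP u h)
      - smult (h^3 * ((h - h2*q) * (h - h2))) (pnP u h)) \<le> 5"
    by linarith
  then have "degree (smult ((h - h2*q) * (h - h2) / h) (pdP u h)
      - smult (h^3 * ((h - h2*q) * (h - h2))) (pnP u h) + monom 1 2 * ?R) \<le> 5"
    using R by (rule degree_add_le)
  then show "degree (num0P u h h2 q) \<le> 4"
    unfolding num0P_def degree_synthetic_div by linarith
qed

text \<open>The points \<open>(\<bar>f, g, \<bar>g) = (v + h/v, g(h/v), v + h2 q/v)\<close> make both the numerator and
  the denominator of (B) vanish, so they satisfy the linearised relation.\<close>
lemma mob_image_point:
  fixes h h2 q v :: complex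
  assumes "h \<noteq> 0" "v \<noteq> 0"
  shows "mob_num u h h2 q (v + h/v) (v + h2*q/v) = gfun h2 (h/v) * mob_den u h h2 q (v + h/v) (v + h2*q/v)"
proof -
  define pn pd where "pn = Pn u h (v + h/v)" and "pd = Pd u h (v + h/v)"
  show ?thesis
    unfolding mob_den_def mob_num_def gfun_def pn_def[symmetric] pd_def[symmetric]
    using assms by (simp add: field_simps) (simp add: algebra_simps power2_eq_square power3_eq_cube power4_eq_xxxx)
qed

text \<open>The nondegeneracy conditions used in the proof, expressed through
  \<open>q = h1^2 h2^2 / (u_1 \<cdots> u_8)\<close> and \<open>h = h1 / q\<close> (so \<open>\<bar>f(v) = v + h/v\<close>).\<close>
locale generic_parameters =
  fixes h1 h2 z :: complex and u :: "nat \<Rightarrow> complex" and q h :: complex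
  assumes q_def: "q = qq h1 h2 u" and h_def: "h = h1 / q"
    and h1_nz: "h1 \<noteq> 0" and h2_nz: "h2 \<noteq> 0" and z_nz: "z \<noteq> 0"
    and u_nz: "\<And>i. i \<in> {1..8} \<Longrightarrow> u i \<noteq> 0"
    and u_inj: "inj_on u {1..8}"
    and u_prod_ne: "\<And>i k. i \<in> {1..8} \<Longrightarrow> k \<in> {1..8} \<Longrightarrow> u i * u k \<noteq> h"
    and u_sq_ne: "\<And>i. i \<in> {1..8} \<Longrightarrow> (u i)^2 + h \<noteq> 0"
    and h_ne_h2: "h \<noteq> h2" and h_ne_h2q: "h \<noteq> h2 * q"
    and z_avoids: "\<And>k. k \<in> {1..8} \<Longrightarrow> z \<noteq> u k \<and> z * u k \<noteq> h \<and> h1 / z \<noteq> u k \<and> h1 / z * u k \<noteq> h"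
    and z_sq_ne: "z^2 + h \<noteq> 0" and h1z_sq_ne: "(h1 / z)^2 + h \<noteq> 0"
begin

abbreviation U :: "complex \<Rightarrow> complex" where
  "U v \<equiv> \<Prod>i\<in>{1..8}. v - u i"

abbreviation "p1 \<equiv> num1P u h h2"
abbreviation "p0 \<equiv> num0P u h h2 q"
abbreviation "q1 \<equiv> den1P u h"
abbreviation "q0 \<equiv> den0P u h h2 q"

lemma prod_u_nz: "(\<Prod>i\<in>{1..8}. u i) \<noteq> 0"
  using u_nz by simp

lemma q_nz: "q \<noteq> 0"
  unfolding q_def qq_def using h1_nz h2_nz prod_u_nz by simp

lemma h_nz: "h \<noteq> 0"
  unfolding h_def using h1_nz q_nz by simp

lemma mm_8_eq: "mm u 8 = h^2 * q * h2^2"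
  unfolding mm_8 h_def q_def qq_def using h1_nz h2_nz prod_u_nz
  by (simp add: field_simps power2_eq_square)

lemma fbar_times: "v \<noteq> 0 \<Longrightarrow> fbar h1 q v * v = v^2 + h"
  unfolding fbar_def h_def using q_nz by (simp add: field_simps power2_eq_square)

lemma fbar_eq: "v \<noteq> 0 \<Longrightarrow> fbar h1 q v = v + h / v"
  unfolding fbar_def h_def by simp

lemma gbar_eq: "gbar h2 q v = v + h2 * q / v"
  unfolding gbar_def by simp

lemma fbar_swap: "v \<noteq> 0 \<Longrightarrow> fbar h1 q (h / v) = fbar h1 q v"
  unfolding fbar_def h_def using h1_nz q_nz by (simp add: field_simps)

lemma fbar_diff:
  "v \<noteq> 0 \<Longrightarrow> w \<noteq> 0 \<Longrightarrow> fbar h1 q v - fbar h1 q w = (v - w) * (1 - h / (v * w))"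
  unfolding fbar_def h_def using q_nz by (simp add: field_simps)

lemma fbar_nz: "v \<noteq> 0 \<Longrightarrow> v^2 + h \<noteq> 0 \<Longrightarrow> fbar h1 q v \<noteq> 0"
  using fbar_times[of v] by auto

lemma degree_p1: "degree p1 \<le> 4" and degree_p0: "degree p0 \<le> 4"
  and degree_q1: "degree q1 \<le> 4" and degree_q0: "degree q0 \<le> 4"
  using degree_mobius_polys[OF mm_8_eq] by simp_all

text \<open>The three consequences of the pencil identity on the curve \<open>\<bar>f = \<bar>f(v)\<close>:
  the denominator at \<open>\<bar>g = \<bar>g(v)\<close> and the two coefficients of \<open>num - g(v) den\<close> are
  multiples of \<open>U(v)\<close>.\<close>
lemma den_on_curve:
  assumes v: "v \<noteq> 0" "v^2 + h \<noteq> 0"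
  defines "x \<equiv> fbar h1 q v"
  shows "v^4 * (poly q1 x * gbar h2 q v + poly q0 x) = h^3 * (h2*q - h) * U v"
proof -
  let ?y = "gbar h2 q v"
  have xv: "x * v = v^2 + h" unfolding x_def by (rule fbar_times[OF v(1)])
  have yv: "?y * v = v^2 + h2 * q" unfolding gbar_def using v(1) by (simp add: field_simps power2_eq_square)
  note pencil = pencil_identity[OF h_nz xv, of u]
  note den = mob_den_factor[OF h_nz, of u h2 q x ?y]
  have "(x * v) * (v^4 * (poly q1 x * ?y + poly q0 x) - h^3 * (h2*q - h) * U v) = 0"
    using den pencil xv yv unfolding mob_den_def by algebra
  moreover have "x * v \<noteq> 0" using xv v(2) by simp
  ultimately show ?thesis by simp
qed

lemma collapse_coefficients:
  assumes v: "v \<noteq> 0" "v^2 + h \<noteq> 0"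
  defines "x \<equiv> fbar h1 q v" and "g \<equiv> gfun h2 v"
  shows "v^4 * (poly p1 x - g * poly q1 x) = h^3 * (h - h2) * U v"
    and "v^5 * (poly p0 x - g * poly q0 x) = h^2 * (h2 - h) * (h^2 + h2*q*v^2) * U v"
proof -
  have xv: "x * v = v^2 + h" unfolding x_def by (rule fbar_times[OF v(1)])
  have gv: "g * v = v^2 + h2" unfolding g_def gfun_def using v(1) by (simp add: field_simps power2_eq_square)
  have hi: "h * inverse h = 1" using h_nz by simp
  note pencil = pencil_identity[OF h_nz xv, of u]
  have "(x * v) * (v^4 * (poly p1 x - g * poly q1 x) - h^3 * (h - h2) * U v) = 0"
    using mobius_coefficients(1)[OF h_nz, of u h2 x]
      mobius_coefficients(3)[OF h_nz, of x u] pencil xv gv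
    by algebra
  moreover have "(x * v) * (v^5 * (poly p0 x - g * poly q0 x) - h^2 * (h2 - h) * (h^2 + h2*q*v^2) * U v) = 0"
    using mobius_coefficients(2)[OF h_nz, of u h2 q x]
      mobius_coefficients(4)[OF h_nz, of x u h2 q] pencil xv gv hi
    unfolding divide_inverse by algebra
  moreover have "x * v \<noteq> 0" using xv v(2) by simp
  ultimately show "v^4 * (poly p1 x - g * poly q1 x) = h^3 * (h - h2) * U v"
    and "v^5 * (poly p0 x - g * poly q0 x) = h^2 * (h2 - h) * (h^2 + h2*q*v^2) * U v"
    by simp_all
qed

lemma image_on_curve:
  assumes v: "v \<noteq> 0" "v^2 + h \<noteq> 0"
  defines "x \<equiv> fbar h1 q v"
  shows "poly p1 x * gbar h2 q v + poly p0 x = gfun h2 (h/v) * (poly q1 x * gbar h2 q v + poly q0 x)"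
proof -
  have "x * (poly p1 x * gbar h2 q v + poly p0 x) = x * (gfun h2 (h/v) * (poly q1 x * gbar h2 q v + poly q0 x))"
    using mob_image_point[OF h_nz v(1), of u h2 q]
    unfolding x_def fbar_eq[OF v(1)] gbar_eq[symmetric] mob_num_factor[OF h_nz] mob_den_factor[OF h_nz]
    by (simp add: algebra_simps)
  moreover have "x \<noteq> 0" unfolding x_def by (rule fbar_nz[OF v])
  ultimately show ?thesis by simp
qed

text \<open>The inverse of (B), with the common factor \<open>\<bar>f\<close> cancelled.\<close>
lemma ginv_formula:
  assumes "ginv_dom h1 h2 u fb gb"
  shows "poly q1 fb * gb + poly q0 fb \<noteq> 0 \<and>
    ginv h1 h2 u fb gb = (poly p1 fb * gb + poly p0 fb) / (poly q1 fb * gb + poly q0 fb)"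
proof -
  have "mob_den u h h2 q fb gb \<noteq> 0 \<and> ginv h1 h2 u fb gb = mob_num u h h2 q fb gb / mob_den u h h2 q fb gb"
    unfolding h_def q_def by (rule ginv_eq_mob[OF h1_nz h2_nz q_nz[unfolded q_def] assms])
  then show ?thesis
    unfolding mob_den_factor[OF h_nz] mob_num_factor[OF h_nz] by simp
qed


lemma fbar_u_inj: "inj_on (\<lambda>k. fbar h1 q (u k)) {1..8}"
proof (rule inj_onI)
  fix k l assume k: "k \<in> {1..8}" and l: "l \<in> {1..8}" and eq: "fbar h1 q (u k) = fbar h1 q (u l)"
  have "(u k - u l) * (1 - h / (u k * u l)) = 0"
    using eq fbar_diff[OF u_nz[OF k] u_nz[OF l]] by simp
  moreover have "1 - h / (u k * u l) \<noteq> 0"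
    using u_prod_ne[OF k l] u_nz[OF k] u_nz[OF l] by (auto simp: field_simps)
  ultimately have "u k = u l" by (simp only: mult_eq_0_iff) simp
  then show "k = l" using u_inj k l by (auto dest: inj_onD)
qed

lemma prod_fbar_diff:
  assumes "v \<noteq> 0"
  shows "(\<Prod>k\<in>{1..8}. fbar h1 q v - fbar h1 q (u k)) = U v * (\<Prod>k\<in>{1..8}. 1 - h / (v * u k))"
proof -
  have "(\<Prod>k\<in>{1..8}. fbar h1 q v - fbar h1 q (u k)) = (\<Prod>k\<in>{1..8}. (v - u k) * (1 - h / (v * u k)))"
    using fbar_diff[OF assms u_nz] by (intro prod.cong) auto
  then show ?thesis
    by (simp add: prod.distrib)
qed

lemma prod_fbar_diff_nz:
  assumes "v \<noteq> 0" and "\<And>k. k \<in> {1..8} \<Longrightarrow> v \<noteq> u k \<and> v * u k \<noteq> h"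
  shows "(\<Prod>k\<in>{1..8}. fbar h1 q v - fbar h1 q (u k)) \<noteq> 0"
proof -
  have "fbar h1 q v - fbar h1 q (u k) \<noteq> 0" if k: "k \<in> {1..8}" for k
  proof -
    have "1 - h / (v * u k) \<noteq> 0"
      using assms k u_nz[OF k] by (auto simp: field_simps)
    then show ?thesis
      using fbar_diff[OF assms(1) u_nz[OF k]] assms(2)[OF k] by simp
  qed
  then show ?thesis by simp
qed

context
  fixes a :: "nat \<Rightarrow> nat \<Rightarrow> complex"
  assumes a_nonzero: "nonzero32 a"
    and a_vanishes: "\<forall>v \<in> u ` {1..8} \<union> {z / q, h1 / (q * z)}. bieval a (fbar h1 q v) (gfun h2 v) = 0"
begin

abbreviation N :: "nat \<Rightarrow> complex poly" where
  "N j \<equiv> subst_ycoeff a p1 p0 q1 q0 j"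

abbreviation Pi :: "complex poly" where
  "Pi \<equiv> \<Prod>k\<in>{1..8}. [:- fbar h1 q (u k), 1:]"

text \<open>Over \<open>\<bar>f = \<bar>f(u_k)\<close> the map \<open>\<bar>g \<mapsto> g\<close> collapses to the constant \<open>g(u_k)\<close>, where
  the original curve passes; so every coefficient of the substituted form vanishes there.\<close>
lemma N_vanishes:
  assumes k: "k \<in> {1..8}"
  shows "poly (N j) (fbar h1 q (u k)) = 0"
proof -
  let ?x = "fbar h1 q (u k)" and ?g = "gfun h2 (u k)"
  have v: "u k \<noteq> 0" "(u k)^2 + h \<noteq> 0" using u_nz[OF k] u_sq_ne[OF k] by auto
  have U0: "U (u k) = 0" using k by (intro prod_zero) auto
  have p1: "poly p1 ?x = ?g * poly q1 ?x"
    using collapse_coefficients(1)[OF v, unfolded U0] v(1) by simp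
  have p0: "poly p0 ?x = ?g * poly q0 ?x"
    using collapse_coefficients(2)[OF v, unfolded U0] v(1) by simp
  have "bieval a ?x ?g = 0" using a_vanishes k by blast
  then have "poly (N 0) ?x + poly (N 1) ?x * y + poly (N 2) ?x * y^2 = 0" for y
  proof -
    have "poly (N 0) ?x + poly (N 1) ?x * y + poly (N 2) ?x * y^2
        = bihom a ?x (?g * (poly q1 ?x * y + poly q0 ?x)) (poly q1 ?x * y + poly q0 ?x)"
      unfolding bihom_subst_ycoeff[symmetric] p1 p0 by (simp add: algebra_simps)
    then show ?thesis
      unfolding bihom_proportional \<open>bieval a ?x ?g = 0\<close> by simp
  qed
  then have "poly [:poly (N 0) ?x, poly (N 1) ?x, poly (N 2) ?x:] y = 0" for y
    by (simp add: algebra_simps power2_eq_square)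
  then have "[:poly (N 0) ?x, poly (N 1) ?x, poly (N 2) ?x:] = 0"
    using poly_all_0_iff_0 by blast
  moreover have "N j = N 2" if "j \<noteq> 0" "j \<noteq> 1"
    using that unfolding subst_ycoeff_def by simp
  ultimately show ?thesis
    by (cases "j = 0 \<or> j = 1") auto
qed

lemma Pi_dvd_N: "Pi dvd N j"
  by (rule prod_linear_factors_dvd[OF _ fbar_u_inj N_vanishes]) auto

definition b :: "nat \<Rightarrow> nat \<Rightarrow> complex" where
  "b i j = coeff (N j div Pi) i"

lemma degree_quotient: "degree (N j div Pi) \<le> 3"
proof (cases "N j div Pi = 0")
  case False
  have "degree (N j) \<le> 11"
    by (rule degree_subst_ycoeff[OF degree_p1 degree_p0 degree_q1 degree_q0])
  moreover have "N j = Pi * (N j div Pi)"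
    using Pi_dvd_N by simp
  moreover have "degree (Pi * (N j div Pi)) = 8 + degree (N j div Pi)"
    using False by (subst degree_mult_eq) (simp_all add: degree_prod_linear_factors)
  ultimately show ?thesis by simp
qed simp

lemma ycoeff_b: "ycoeff b j = N j div Pi"
  unfolding b_def by (rule ycoeff_of_coeffs) (rule degree_quotient)

theorem substitution_identity:
  "bihom a fb (poly p1 fb * gb + poly p0 fb) (poly q1 fb * gb + poly q0 fb)
   = (\<Prod>i\<in>{1..8}. fb - fbar h1 q (u i)) * bieval b fb gb"
proof -
  have "poly (N j) fb = (\<Prod>i\<in>{1..8}. fb - fbar h1 q (u i)) * poly (ycoeff b j) fb" for j
    using Pi_dvd_N[of j] unfolding ycoeff_b by (auto simp: poly_prod elim!: dvdE)
  then show ?thesis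
    unfolding bihom_subst_ycoeff bieval_ycoeff by (simp add: algebra_simps)
qed

lemma key_identity:
  assumes v: "v \<noteq> 0" "v^2 + h \<noteq> 0"
  shows "v^8 * (\<Prod>k\<in>{1..8}. fbar h1 q v - fbar h1 q (u k)) * bieval b (fbar h1 q v) (gbar h2 q v)
     = (h^3 * (h2*q - h))^2 * (U v)^2 * bieval a (fbar h1 q v) (gfun h2 (h/v))"
proof -
  let ?x = "fbar h1 q v" and ?y = "gbar h2 q v"
  let ?Q = "poly q1 ?x * ?y + poly q0 ?x"
  have "(\<Prod>k\<in>{1..8}. ?x - fbar h1 q (u k)) * bieval b ?x ?y = ?Q^2 * bieval a ?x (gfun h2 (h/v))"
    using substitution_identity[of ?x ?y] unfolding image_on_curve[OF v] bihom_proportional by simp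
  then have "v^8 * (\<Prod>k\<in>{1..8}. ?x - fbar h1 q (u k)) * bieval b ?x ?y
      = (v^4 * ?Q)^2 * bieval a ?x (gfun h2 (h/v))"
    by (simp add: power_mult_distrib power_mult[symmetric] mult.assoc)
  then show ?thesis
    unfolding den_on_curve[OF v] by (simp add: power_mult_distrib)
qed

lemma b_vanishes_at_image:
  assumes v: "v \<noteq> 0" "v^2 + h \<noteq> 0"
    and avoid: "\<And>k. k \<in> {1..8} \<Longrightarrow> v \<noteq> u k \<and> v * u k \<noteq> h"
    and a_zero: "bieval a (fbar h1 q (h/v)) (gfun h2 (h/v)) = 0"
  shows "bieval b (fbar h1 q v) (gbar h2 q v) = 0"
  using key_identity[OF v] a_zero prod_fbar_diff_nz[OF v(1) avoid]
  unfolding fbar_swap[OF v(1)] using v(1) by simp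

lemma b_vanishes_at_z: "bieval b (fbar h1 q z) (gbar h2 q z) = 0"
proof (rule b_vanishes_at_image)
  show "z \<noteq> 0" "z^2 + h \<noteq> 0" using z_nz z_sq_ne by auto
  show "z \<noteq> u k \<and> z * u k \<noteq> h" if "k \<in> {1..8}" for k using z_avoids[OF that] by auto
  have "h / z = h1 / (q * z)" unfolding h_def by simp
  then show "bieval a (fbar h1 q (h / z)) (gfun h2 (h / z)) = 0" using a_vanishes by simp
qed

lemma b_vanishes_at_h1_z: "bieval b (fbar h1 q (h1 / z)) (gbar h2 q (h1 / z)) = 0"
proof (rule b_vanishes_at_image)
  show "h1 / z \<noteq> 0" "(h1 / z)^2 + h \<noteq> 0" using h1_nz z_nz h1z_sq_ne by auto
  show "h1 / z \<noteq> u k \<and> h1 / z * u k \<noteq> h" if "k \<in> {1..8}" for k using z_avoids[OF that] by auto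
  have "h / (h1 / z) = z / q" unfolding h_def using h1_nz by simp
  then show "bieval a (fbar h1 q (h / (h1 / z))) (gfun h2 (h / (h1 / z))) = 0" using a_vanishes by simp
qed

text \<open>At \<open>v = u_i\<close> both sides of the key identity vanish to first order in \<open>U\<close>; cancelling
  one factor \<open>U(v)\<close> and passing to the limit \<open>v \<rightarrow> u_i\<close> gives the vanishing of \<open>b\<close>.\<close>
lemma b_vanishes_at_u:
  assumes i: "i \<in> {1..8}"
  shows "bieval b (fbar h1 q (u i)) (gbar h2 q (u i)) = 0"
proof -
  define T where "T v = (\<Prod>k\<in>{1..8}. 1 - h / (v * u k))" for v
  define \<psi> where "\<psi> v = v^8 * T v * bieval b (fbar h1 q v) (gbar h2 q v)
      - (h^3 * (h2*q - h))^2 * U v * bieval a (fbar h1 q v) (gfun h2 (h/v))" for v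
  have ui: "u i \<noteq> 0" using u_nz[OF i] .
  have rel: "U v * \<psi> v = 0" if "v \<noteq> 0" "v^2 + h \<noteq> 0" for v
    using key_identity[OF that] unfolding prod_fbar_diff[OF that(1)] \<psi>_def T_def
    by (simp add: algebra_simps power2_eq_square)
  have "eventually (\<lambda>v. v \<noteq> 0 \<and> v^2 + h \<noteq> 0 \<and> U v \<noteq> 0) (at (u i))"
  proof -
    have "((\<lambda>v. v^2 + h) \<longlongrightarrow> (u i)^2 + h) (at (u i))" by (intro tendsto_intros)
    then have "eventually (\<lambda>v. v^2 + h \<noteq> 0) (at (u i))"
      using u_sq_ne[OF i] by (rule tendsto_imp_eventually_ne)
    moreover have "eventually (\<lambda>v. \<forall>k\<in>{1..8}. v \<noteq> u k) (at (u i))"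
      by (rule eventually_ball_finite) (auto intro: eventually_neq_at_within)
    moreover have "eventually (\<lambda>v. v \<noteq> 0) (at (u i))"
      using tendsto_imp_eventually_ne[OF tendsto_ident_at ui] .
    ultimately show ?thesis
      by eventually_elim auto
  qed
  then have "eventually (\<lambda>v. \<psi> v = 0) (at (u i))"
  proof (rule eventually_mono)
    fix v assume v: "v \<noteq> 0 \<and> v^2 + h \<noteq> 0 \<and> U v \<noteq> 0"
    then have "U v * \<psi> v = 0" using rel by blast
    with v show "\<psi> v = 0" by (simp only: mult_eq_0_iff) blast
  qed
  moreover have "isCont \<psi> (u i)"
    unfolding \<psi>_def T_def bieval_def fbar_def gbar_def gfun_def
    using ui u_nz q_nz h_nz by (auto intro!: continuous_intros)
  ultimately have "\<psi> (u i) = 0"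
    by (rule continuous_eventually_zero[rotated])
  moreover have "U (u i) = 0" using i by (intro prod_zero) auto
  then have "\<psi> (u i) = (u i)^8 * T (u i) * bieval b (fbar h1 q (u i)) (gbar h2 q (u i))"
    unfolding \<psi>_def by simp
  moreover have "T (u i) \<noteq> 0"
    unfolding T_def using u_prod_ne[OF i] ui u_nz by (auto simp: field_simps)
  ultimately show ?thesis
    using ui by simp
qed

text \<open>The Moebius map is nondegenerate: its determinant is nonzero at \<open>\<bar>f(z)\<close>.\<close>
lemma mobius_det_nz: "p1 * q0 - p0 * q1 \<noteq> 0"
proof -
  let ?x = "fbar h1 q z" and ?y = "gbar h2 q z" and ?w = "h / z"
  let ?g = "gfun h2 ?w" and ?Q = "poly q1 ?x * ?y + poly q0 ?x"
  have z: "z \<noteq> 0" "z^2 + h \<noteq> 0" using z_nz z_sq_ne by auto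
  have w: "?w \<noteq> 0" "?w^2 + h \<noteq> 0"
  proof -
    show "?w \<noteq> 0" using h_nz z(1) by simp
    have "?w^2 + h = h * (z^2 + h) / z^2"
      using z(1) by (simp add: field_simps power2_eq_square)
    then show "?w^2 + h \<noteq> 0" using z h_nz by simp
  qed
  have "?w - u k \<noteq> 0" and "z - u k \<noteq> 0" if "k \<in> {1..8}" for k
    using z_avoids[OF that] z(1) by (auto simp: field_simps)
  then have Uw: "U ?w \<noteq> 0" and Uz: "U z \<noteq> 0"
    by auto
  have "?w^4 * (poly p1 ?x - ?g * poly q1 ?x) = h^3 * (h - h2) * U ?w"
    using collapse_coefficients(1)[OF w] unfolding fbar_swap[OF z(1)] .
  then have A: "poly p1 ?x - ?g * poly q1 ?x \<noteq> 0"
    using h_nz h_ne_h2 Uw by auto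
  have B: "?Q \<noteq> 0"
    using den_on_curve[OF z] h_nz h_ne_h2q Uz by auto
  have p0: "poly p0 ?x = ?g * ?Q - poly p1 ?x * ?y"
    using image_on_curve[OF z] by (simp add: algebra_simps)
  have "poly (p1 * q0 - p0 * q1) ?x = (poly p1 ?x - ?g * poly q1 ?x) * ?Q"
    unfolding poly_diff poly_mult p0 by (simp add: algebra_simps)
  then show ?thesis
    using A B by (metis mult_eq_0_iff poly_0)
qed

text \<open>Since the substitution is nondegenerate and \<open>a \<noteq> 0\<close>, the new form is nonzero.\<close>
lemma b_nonzero: "nonzero32 b"
proof (rule ccontr)
  assume "\<not> nonzero32 b"
  then have "bieval b fb gb = 0" for fb gb
    unfolding nonzero32_def bieval_def by simp
  then have "bihom a fb (poly p1 fb * gb + poly p0 fb) (poly q1 fb * gb + poly q0 fb) = 0" for fb gb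
    unfolding substitution_identity by simp
  then show False
    using mobius_substitution_nonzero[OF mobius_det_nz] a_nonzero by blast
qed

theorem transformed_curve:
  "\<exists>b p1 p0 q1 q0 :: complex poly.
     (\<forall>fb gb. ginv_dom h1 h2 u fb gb \<longrightarrow>
         poly q1 fb * gb + poly q0 fb \<noteq> 0 \<and>
         ginv h1 h2 u fb gb = (poly p1 fb * gb + poly p0 fb) / (poly q1 fb * gb + poly q0 fb)) \<and>
     nonzero32 b \<and>
     (\<forall>fb gb. bihom a fb (poly p1 fb * gb + poly p0 fb) (poly q1 fb * gb + poly q0 fb)
              = (\<Prod>i\<in>{1..8}. fb - fbar h1 q (u i)) * bieval b fb gb) \<and>
     (\<forall>v \<in> u ` {1..8} \<union> {z, h1 / z}. bieval b (fbar h1 q v) (gbar h2 q v) = 0)"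
proof (intro exI conjI allI impI ballI)
  fix fb gb assume "ginv_dom h1 h2 u fb gb"
  with ginv_formula show "poly q1 fb * gb + poly q0 fb \<noteq> 0"
    and "ginv h1 h2 u fb gb = (poly p1 fb * gb + poly p0 fb) / (poly q1 fb * gb + poly q0 fb)"
    by blast+
next
  show "nonzero32 b" by (rule b_nonzero)
next
  fix fb gb
  show "bihom a fb (poly p1 fb * gb + poly p0 fb) (poly q1 fb * gb + poly q0 fb)
      = (\<Prod>i\<in>{1..8}. fb - fbar h1 q (u i)) * bieval b fb gb"
    by (rule substitution_identity)
next
  fix v assume "v \<in> u ` {1..8} \<union> {z, h1 / z}"
  then show "bieval b (fbar h1 q v) (gbar h2 q v) = 0"
    using b_vanishes_at_u b_vanishes_at_z b_vanishes_at_h1_z by auto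
qed

end

end

section \<open>The genericity condition as a polynomial\<close>

lemma polyfun_diff: "p \<in> polyfun \<Longrightarrow> r \<in> polyfun \<Longrightarrow> (\<lambda>x. p x - r x) \<in> polyfun"
  using pf_add[OF _ pf_mul[OF pf_const, of r "-1"], of p] by simp

lemma polyfun_prod:
  "finite S \<Longrightarrow> (\<And>i. i \<in> S \<Longrightarrow> f i \<in> polyfun) \<Longrightarrow> (\<lambda>x. \<Prod>i\<in>S. f i x) \<in> polyfun"
proof (induction S rule: finite_induct)
  case empty
  then show ?case using pf_const[of 1] by simp
next
  case (insert a S)
  then have "(\<lambda>x. f a x * (\<lambda>x. \<Prod>i\<in>S. f i x) x) \<in> polyfun" by (intro pf_mul) auto
  then show ?case using insert by simp
qed

lemma polyfun_power: "p \<in> polyfun \<Longrightarrow> (\<lambda>x. p x ^ n) \<in> polyfun"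
proof (induction n)
  case 0
  then show ?case using pf_const[of 1] by simp
next
  case (Suc n)
  then have "(\<lambda>x. p x * (\<lambda>x. p x ^ n) x) \<in> polyfun" by (intro pf_mul) auto
  then show ?case by simp
qed

text \<open>The product of all nondegeneracy conditions, in the raw parameters
  \<open>x 0 = h1, x 1..x 8 = u_1..u_8, x 9 = h2, x 10 = z\<close>; here \<open>P = u_1 \<cdots> u_8\<close>, so that
  \<open>q = h1^2 h2^2 / P\<close> and \<open>h = P / (h1 h2^2)\<close>.\<close>
definition genericity_poly :: "(nat \<Rightarrow> complex) \<Rightarrow> complex" where
  "genericity_poly x = (let h1 = x 0; h2 = x 9; z = x 10; P = \<Prod>i\<in>{1..8}. x i in
     h1 * h2 * z * P * (P - h1 * h2^3) * (P^2 - h1^3 * h2^5)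
     * (\<Prod>i\<in>{1..8}. P + h1 * h2^2 * x i ^ 2)
     * (\<Prod>i\<in>{1..8}. \<Prod>k\<in>{1..8} - {i}. x i - x k)
     * (\<Prod>i\<in>{1..8}. \<Prod>k\<in>{1..8}. P - h1 * h2^2 * x i * x k)
     * (\<Prod>k\<in>{1..8}. (z - x k) * (P - h1 * h2^2 * z * x k) * (h1 - z * x k)
          * (z * P - h1^2 * h2^2 * x k))
     * (P + h1 * h2^2 * z^2) * (h1^3 * h2^2 + z^2 * P))"

lemma genericity_poly_polyfun: "genericity_poly \<in> polyfun"
proof -
  have "(\<lambda>x. genericity_poly x) \<in> polyfun"
    unfolding genericity_poly_def Let_def
    by (intro pf_mul pf_add polyfun_diff polyfun_power polyfun_prod pf_var pf_const
        finite_atLeastAtMost finite_Diff)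
  then show ?thesis by simp
qed

lemma genericity_poly_nonzero: "\<exists>x. genericity_poly x \<noteq> 0"
proof
  have atLeastAtMost_8: "{Suc 0..8} = {1, 2, 3, 4, 5, 6, 7, 8::nat}" by auto
  show "genericity_poly (\<lambda>i. if i = 0 \<or> i = 9 then 1 else of_nat i) \<noteq> 0"
    unfolding genericity_poly_def Let_def
    by (simp add: prod_zero_iff atLeastAtMost_8 insert_Diff_if)
qed

lemma generic_parameters_if_nonzero:
  assumes "genericity_poly (params h1 h2 u z) \<noteq> 0"
  shows "generic_parameters h1 h2 z u (qq h1 h2 u) (h1 / qq h1 h2 u)"
proof -
  define P where "P = (\<Prod>i\<in>{1..8}. u i)"
  have params: "params h1 h2 u z 0 = h1" "params h1 h2 u z 9 = h2" "params h1 h2 u z 10 = z"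
    "\<And>i. i \<in> {1..8} \<Longrightarrow> params h1 h2 u z i = u i"
    unfolding params_def by auto
  have "genericity_poly (params h1 h2 u z) = (h1 * h2 * z * P * (P - h1 * h2^3) * (P^2 - h1^3 * h2^5)
     * (\<Prod>i\<in>{1..8}. P + h1 * h2^2 * u i ^ 2)
     * (\<Prod>i\<in>{1..8}. \<Prod>k\<in>{1..8} - {i}. u i - u k)
     * (\<Prod>i\<in>{1..8}. \<Prod>k\<in>{1..8}. P - h1 * h2^2 * u i * u k)
     * (\<Prod>k\<in>{1..8}. (z - u k) * (P - h1 * h2^2 * z * u k) * (h1 - z * u k)
          * (z * P - h1^2 * h2^2 * u k))
     * (P + h1 * h2^2 * z^2) * (h1^3 * h2^2 + z^2 * P))"
    unfolding genericity_poly_def Let_def P_def params(1-3)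
    by (intro arg_cong2[where f = "(*)"] refl prod.cong) (auto simp: params(4))
  with assms have G: "h1 \<noteq> 0" "h2 \<noteq> 0" "z \<noteq> 0" "P \<noteq> 0" "P \<noteq> h1 * h2^3" "P^2 \<noteq> h1^3 * h2^5"
    "\<And>i. i \<in> {1..8} \<Longrightarrow> P + h1 * h2^2 * (u i)^2 \<noteq> 0"
    "\<And>i k. i \<in> {1..8} \<Longrightarrow> k \<in> {1..8} \<Longrightarrow> i \<noteq> k \<Longrightarrow> u i \<noteq> u k"
    "\<And>i k. i \<in> {1..8} \<Longrightarrow> k \<in> {1..8} \<Longrightarrow> P \<noteq> h1 * h2^2 * u i * u k"
    "\<And>k. k \<in> {1..8} \<Longrightarrow> z \<noteq> u k \<and> P \<noteq> h1 * h2^2 * z * u k \<and> h1 \<noteq> z * u k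
       \<and> z * P \<noteq> h1^2 * h2^2 * u k"
    "P + h1 * h2^2 * z^2 \<noteq> 0" "h1^3 * h2^2 + z^2 * P \<noteq> 0"
    by (auto simp: prod_zero_iff)
  have q: "qq h1 h2 u = h1^2 * h2^2 / P"
    unfolding qq_def P_def ..
  have h: "h1 / qq h1 h2 u = P / (h1 * h2^2)"
    unfolding q using G(1,2,4) by (simp add: field_simps power2_eq_square)
  show ?thesis
  proof (unfold_locales, unfold h)
    show "h1 \<noteq> 0" "h2 \<noteq> 0" "z \<noteq> 0" by (fact G)+
    show "u i \<noteq> 0" if "i \<in> {1..8}" for i
      using G(4) that unfolding P_def by auto
    show "inj_on u {1..8}"
      using G(8) unfolding inj_on_def by blast
    show "u i * u k \<noteq> P / (h1 * h2^2)" if "i \<in> {1..8}" "k \<in> {1..8}" for i k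
      using G(1,2) G(9)[OF that] by (auto simp: field_simps mult.commute mult.left_commute)
    show "(u i)^2 + P / (h1 * h2^2) \<noteq> 0" if "i \<in> {1..8}" for i
      using G(1,2) G(7)[OF that] by (auto simp: field_simps add.commute)
    show "P / (h1 * h2^2) \<noteq> h2"
      using G(1,2,5) by (auto simp: field_simps power2_eq_square power3_eq_cube)
    show "P / (h1 * h2^2) \<noteq> h2 * qq h1 h2 u"
      unfolding q using G(1,2,4,6) by (auto simp: field_simps eval_nat_numeral)
    show "z \<noteq> u k \<and> z * u k \<noteq> P / (h1 * h2^2) \<and> h1 / z \<noteq> u k \<and> h1 / z * u k \<noteq> P / (h1 * h2^2)"
      if "k \<in> {1..8}" for k
      using G(1,2,3) G(10)[OF that] by (auto simp: field_simps mult.commute mult.left_commute power2_eq_square)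
    show "z^2 + P / (h1 * h2^2) \<noteq> 0"
      using G(1,2,11) by (auto simp: field_simps add.commute)
    show "(h1 / z)^2 + P / (h1 * h2^2) \<noteq> 0"
      using G(1,2,3,12) by (auto simp: field_simps add.commute power2_eq_square eval_nat_numeral)
  qed (simp_all add: q)
qed

theorem lemma4:
  "\<exists>p\<in>polyfun. (\<exists>x. p x \<noteq> 0) \<and>
    (\<forall>h1 h2 z (u :: nat \<Rightarrow> complex). p (params h1 h2 u z) \<noteq> 0 \<longrightarrow>
      (\<forall>a. nonzero32 a \<and>
          (\<forall>v \<in> u ` {1..8} \<union> {z / qq h1 h2 u, h1 / (qq h1 h2 u * z)}.
             bieval a (fbar h1 (qq h1 h2 u) v) (gfun h2 v) = 0) \<longrightarrow>
        (\<exists>b p1 p0 q1 q0 :: complex poly.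
           (\<forall>fb gb. ginv_dom h1 h2 u fb gb \<longrightarrow>
               poly q1 fb * gb + poly q0 fb \<noteq> 0 \<and>
               ginv h1 h2 u fb gb = (poly p1 fb * gb + poly p0 fb) / (poly q1 fb * gb + poly q0 fb)) \<and>
           nonzero32 b \<and>
           (\<forall>fb gb. bihom a fb (poly p1 fb * gb + poly p0 fb) (poly q1 fb * gb + poly q0 fb)
                    = (\<Prod>i\<in>{1..8}. fb - fbar h1 (qq h1 h2 u) (u i)) * bieval b fb gb) \<and>
           (\<forall>v \<in> u ` {1..8} \<union> {z, h1 / z}.
              bieval b (fbar h1 (qq h1 h2 u) v) (gbar h2 (qq h1 h2 u) v) = 0))))"
proof (intro bexI[of _ genericity_poly] conjI allI impI)
  show "genericity_poly \<in> polyfun" by (rule genericity_poly_polyfun)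
  show "\<exists>x. genericity_poly x \<noteq> 0" by (rule genericity_poly_nonzero)
  fix h1 h2 z and u :: "nat \<Rightarrow> complex" and a :: "nat \<Rightarrow> nat \<Rightarrow> complex"
  assume "genericity_poly (params h1 h2 u z) \<noteq> 0"
  then interpret generic_parameters h1 h2 z u "qq h1 h2 u" "h1 / qq h1 h2 u"
    by (rule generic_parameters_if_nonzero)
  assume "nonzero32 a \<and> (\<forall>v \<in> u ` {1..8} \<union> {z / qq h1 h2 u, h1 / (qq h1 h2 u * z)}.
      bieval a (fbar h1 (qq h1 h2 u) v) (gfun h2 v) = 0)"
  then show "\<exists>b p1 p0 q1 q0 :: complex poly.
           (\<forall>fb gb. ginv_dom h1 h2 u fb gb \<longrightarrow>
               poly q1 fb * gb + poly q0 fb \<noteq> 0 \<and>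
               ginv h1 h2 u fb gb = (poly p1 fb * gb + poly p0 fb) / (poly q1 fb * gb + poly q0 fb)) \<and>
           nonzero32 b \<and>
           (\<forall>fb gb. bihom a fb (poly p1 fb * gb + poly p0 fb) (poly q1 fb * gb + poly q0 fb)
                    = (\<Prod>i\<in>{1..8}. fb - fbar h1 (qq h1 h2 u) (u i)) * bieval b fb gb) \<and>
           (\<forall>v \<in> u ` {1..8} \<union> {z, h1 / z}.
              bieval b (fbar h1 (qq h1 h2 u) v) (gbar h2 (qq h1 h2 u) v) = 0)"
    by (intro transformed_curve) auto
qed

end
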